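(* Let $n\ge 3$ and let $S_n$ be the star graph with vertices $a_1,\dots,a_n$ and center $a_1$. Then $$\liminf_{p\to\infty}\|M_{S_n}\|_p^p\geq \frac{1+\sqrt{n}}{2}.$$
   Context: For a finite connected graph $G=(V,E)$ with graph distance $d_G$ and $f:V\to\mathbb{R}$, $M_Gf(v)=\sup_{r\geq 0}\frac{1}{|B(v,r)|}\sum_{u\in B(v,r)}|f(u)|$, where $B(v,r)=\{u\in V: d_G(u,v)\le r\}$. For $g:V\to\mathbb{R}$, $\|g\|_p=(\sum_{v\in V}|g(v)|^p)^{1/p}$ and $\|M_G\|_p=\sup_{f\neq 0}\|M_Gf\|_p/\|f\|_p$. The star graph $S_n$ has edges exactly between $a_1$ and each $a_i$, $i\ge 2$. *)

theory Defs
  imports "HOL-Analysis.Analysis"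
begin

definition graph_rel :: "'a set \<Rightarrow> ('a \<Rightarrow> 'a \<Rightarrow> bool) \<Rightarrow> ('a \<times> 'a) set" where
  "graph_rel V E = {(u, v). u \<in> V \<and> v \<in> V \<and> E u v}"

definition gdist :: "'a set \<Rightarrow> ('a \<Rightarrow> 'a \<Rightarrow> bool) \<Rightarrow> 'a \<Rightarrow> 'a \<Rightarrow> nat" where
  "gdist V E u v = (LEAST k. (u, v) \<in> (graph_rel V E) ^^ k)"

definition gball :: "'a set \<Rightarrow> ('a \<Rightarrow> 'a \<Rightarrow> bool) \<Rightarrow> 'a \<Rightarrow> real \<Rightarrow> 'a set" where
  "gball V E v r = {u \<in> V. real (gdist V E u v) \<le> r}"

definition maxop :: "'a set \<Rightarrow> ('a \<Rightarrow> 'a \<Rightarrow> bool) \<Rightarrow> ('a \<Rightarrow> real) \<Rightarrow> 'a \<Rightarrow> real" where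
  "maxop V E f v = (SUP r \<in> {0..}. (\<Sum>u \<in> gball V E v r. \<bar>f u\<bar>) / real (card (gball V E v r)))"

definition pnorm :: "'a set \<Rightarrow> real \<Rightarrow> ('a \<Rightarrow> real) \<Rightarrow> real" where
  "pnorm V p g = (\<Sum>v \<in> V. \<bar>g v\<bar> powr p) powr (1 / p)"

definition maxop_norm :: "'a set \<Rightarrow> ('a \<Rightarrow> 'a \<Rightarrow> bool) \<Rightarrow> real \<Rightarrow> real" where
  "maxop_norm V E p = (SUP f \<in> {f. \<exists>v \<in> V. f v \<noteq> 0}. pnorm V p (maxop V E f) / pnorm V p f)"

text \<open>Star graph S_n on vertices 1..n (vertex i stands for a_i), centre 1.\<close>
definition star_edge :: "nat \<Rightarrow> nat \<Rightarrow> nat \<Rightarrow> bool" where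
  "star_edge n i j = ((i = 1 \<and> 2 \<le> j \<and> j \<le> n) \<or> (j = 1 \<and> 2 \<le> i \<and> i \<le> n))"

end

theory Submission
  imports Defs
begin

(* Test the maximal operator on the function f that is c at the centre and 1 at the n - 1
   leaves. The ball of radius 0 at the centre gives Mf(a_1) >= c, the ball of radius 1 at a leaf
   gives Mf(a_i) >= (1 + c)/2 >= sqrt c. Writing x = c^(p/2), this yields
   ||Mf||_p^p / ||f||_p^p >= (x^2 + (n - 1) x) / (x^2 + n - 1), a ratio maximised at
   x = 1 + sqrt n, where it equals x/2. So ||M||_p^p >= (1 + sqrt n)/2 holds for every p > 0,
   not only in the limit. *)

lemma gdist_le: "(u, v) \<in> graph_rel V E ^^ k \<Longrightarrow> gdist V E u v \<le> k"
  unfolding gdist_def by (rule Least_le)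

lemma gdist_self: "gdist V E u u = 0"
  using gdist_le[of u u 0 V E] by simp

lemma relpow_gdist:
  assumes "(u, v) \<in> (graph_rel V E)\<^sup>*"
  shows "(u, v) \<in> graph_rel V E ^^ gdist V E u v"
  using assms unfolding gdist_def rtrancl_power by (rule LeastI_ex)

lemma gdist_eq_0_iff:
  assumes "(u, v) \<in> (graph_rel V E)\<^sup>*"
  shows "gdist V E u v = 0 \<longleftrightarrow> u = v"
  using relpow_gdist[OF assms] gdist_self by auto

lemma gdist_le_1_iff:
  assumes "(u, v) \<in> (graph_rel V E)\<^sup>*"
  shows "gdist V E u v \<le> 1 \<longleftrightarrow> u = v \<or> (u, v) \<in> graph_rel V E"
proof
  assume "gdist V E u v \<le> 1"
  then consider "gdist V E u v = 0" | "gdist V E u v = 1" by linarith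
  then show "u = v \<or> (u, v) \<in> graph_rel V E"
    using relpow_gdist[OF assms] by cases auto
next
  assume "u = v \<or> (u, v) \<in> graph_rel V E"
  then show "gdist V E u v \<le> 1"
    using gdist_self[of V E u] gdist_le[of u v 1 V E] by auto
qed

lemma gball_0:
  assumes "v \<in> V" "\<And>u. u \<in> V \<Longrightarrow> (u, v) \<in> (graph_rel V E)\<^sup>*"
  shows "gball V E v 0 = {v}"
  using assms gdist_eq_0_iff[of _ v V E] unfolding gball_def by auto

lemma gball_1:
  assumes "v \<in> V" "\<And>u. u \<in> V \<Longrightarrow> (u, v) \<in> (graph_rel V E)\<^sup>*"
  shows "gball V E v 1 = insert v {u \<in> V. E u v}"
  using assms gdist_le_1_iff[of _ v V E] unfolding gball_def graph_rel_def by auto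

lemma maxop_ge_gball_average:
  assumes "finite V" "r \<ge> 0"
  shows "(\<Sum>u \<in> gball V E v r. \<bar>f u\<bar>) / real (card (gball V E v r)) \<le> maxop V E f v"
proof -
  let ?avg = "\<lambda>S. (\<Sum>u \<in> S. \<bar>f u\<bar>) / real (card S)"
  have "(\<lambda>r. ?avg (gball V E v r)) ` {0..} \<subseteq> ?avg ` Pow V"
    by (auto simp: gball_def)
  then have "bdd_above ((\<lambda>r. ?avg (gball V E v r)) ` {0..})"
    using assms(1) by (meson bdd_above_mono finite_Pow_iff finite_imageI bdd_above_finite)
  then show ?thesis
    unfolding maxop_def by (rule cSUP_upper[rotated]) (use assms in auto)
qed

lemma maxop_nonneg:
  assumes "finite V"
  shows "0 \<le> maxop V E f v"
proof -
  have "0 \<le> (\<Sum>u \<in> gball V E v 0. \<bar>f u\<bar>) / real (card (gball V E v 0))"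
    by (simp add: sum_nonneg)
  also have "\<dots> \<le> maxop V E f v"
    by (rule maxop_ge_gball_average[OF assms order_refl])
  finally show ?thesis .
qed

lemma maxop_le_bound:
  assumes "finite V" "0 \<le> C" "\<And>u. u \<in> V \<Longrightarrow> \<bar>f u\<bar> \<le> C"
  shows "maxop V E f v \<le> C"
  unfolding maxop_def
proof (rule cSUP_least)
  fix r :: real
  let ?B = "gball V E v r"
  have "(\<Sum>u \<in> ?B. \<bar>f u\<bar>) \<le> real (card ?B) * C"
    by (rule sum_bounded_above) (use assms(3) in \<open>auto simp: gball_def\<close>)
  then show "(\<Sum>u \<in> ?B. \<bar>f u\<bar>) / real (card ?B) \<le> C"
    using assms(2) by (cases "card ?B = 0") (auto simp: divide_le_eq mult.commute)
qed auto

lemma pnorm_powr: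
  assumes "p > 0"
  shows "pnorm V p g powr p = (\<Sum>v \<in> V. \<bar>g v\<bar> powr p)"
  using assms by (simp add: pnorm_def powr_powr sum_nonneg)

lemma pnorm_nonneg: "0 \<le> pnorm V p g"
  by (simp add: pnorm_def)

lemma pnorm_pos:
  assumes "finite V" "v \<in> V" "g v \<noteq> 0"
  shows "0 < pnorm V p g"
proof -
  have "0 < (\<Sum>v \<in> V. \<bar>g v\<bar> powr p)"
    by (rule sum_pos2[OF assms(1,2)]) (use assms(3) in auto)
  then show ?thesis by (simp add: pnorm_def)
qed

lemma abs_le_pnorm:
  assumes "finite V" "p > 0" "u \<in> V"
  shows "\<bar>g u\<bar> \<le> pnorm V p g"
proof -
  have "\<bar>g u\<bar> = (\<bar>g u\<bar> powr p) powr (1 / p)"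
    using assms(2) by (simp add: powr_powr)
  also have "\<dots> \<le> (\<Sum>v \<in> V. \<bar>g v\<bar> powr p) powr (1 / p)"
    using assms by (intro powr_mono2 member_le_sum) auto
  finally show ?thesis by (simp add: pnorm_def)
qed

lemma pnorm_le_card_powr_mult:
  assumes "p > 0" "C \<ge> 0" "\<And>v. v \<in> V \<Longrightarrow> \<bar>g v\<bar> \<le> C"
  shows "pnorm V p g \<le> real (card V) powr (1 / p) * C"
proof -
  have "(\<Sum>v \<in> V. \<bar>g v\<bar> powr p) \<le> real (card V) * C powr p"
    using assms by (intro sum_bounded_above powr_mono2) auto
  then have "pnorm V p g \<le> (real (card V) * C powr p) powr (1 / p)"
    unfolding pnorm_def using assms(1) by (intro powr_mono2) (auto intro: sum_nonneg)
  also have "\<dots> = real (card V) powr (1 / p) * C"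
    using assms(1,2) by (simp add: powr_mult powr_powr)
  finally show ?thesis .
qed

lemma pnorm_maxop_le:
  assumes "finite V" "p > 0"
  shows "pnorm V p (maxop V E f) \<le> real (card V) powr (1 / p) * pnorm V p f"
proof (rule pnorm_le_card_powr_mult[OF assms(2) pnorm_nonneg])
  fix v
  show "\<bar>maxop V E f v\<bar> \<le> pnorm V p f"
    using maxop_nonneg[OF assms(1)] maxop_le_bound[OF assms(1) pnorm_nonneg abs_le_pnorm[OF assms]]
    by simp
qed

lemma maxop_ratio_le_maxop_norm:
  assumes "finite V" "p > 0" "v \<in> V" "f v \<noteq> 0"
  shows "pnorm V p (maxop V E f) / pnorm V p f \<le> maxop_norm V E p"
  unfolding maxop_norm_def
proof (rule cSUP_upper)
  show "f \<in> {f. \<exists>v \<in> V. f v \<noteq> 0}"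
    using assms(3,4) by blast
  have "pnorm V p (maxop V E g) / pnorm V p g \<le> real (card V) powr (1 / p)"
    if "w \<in> V" "g w \<noteq> 0" for g w
    using pnorm_maxop_le[OF assms(1,2), of E g] pnorm_pos[of V w g p] assms(1) that
    by (simp add: divide_le_eq)
  then show "bdd_above ((\<lambda>f. pnorm V p (maxop V E f) / pnorm V p f) ` {f. \<exists>v \<in> V. f v \<noteq> 0})"
    by (intro bdd_aboveI2) blast
qed

lemma powr_sum_ratio_le_maxop_norm:
  assumes "finite V" "p > 0" "v \<in> V" "f v \<noteq> 0"
  shows "(\<Sum>v \<in> V. \<bar>maxop V E f v\<bar> powr p) / (\<Sum>v \<in> V. \<bar>f v\<bar> powr p)
    \<le> maxop_norm V E p powr p"
proof -
  have "(\<Sum>v \<in> V. \<bar>maxop V E f v\<bar> powr p) / (\<Sum>v \<in> V. \<bar>f v\<bar> powr p)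
      = (pnorm V p (maxop V E f) / pnorm V p f) powr p"
    using assms(2) by (simp add: powr_divide pnorm_powr pnorm_nonneg)
  also have "\<dots> \<le> maxop_norm V E p powr p"
    using maxop_ratio_le_maxop_norm[where E = E and f = f and v = v, OF assms] assms(2)
    by (intro powr_mono2) (auto simp: pnorm_nonneg)
  finally show ?thesis .
qed

lemma star_rtrancl:
  assumes "u \<in> {1..n}" "v \<in> {1..n}"
  shows "(u, v) \<in> (graph_rel {1..n} (star_edge n))\<^sup>*"
proof -
  let ?R = "graph_rel {1..n} (star_edge n)"
  have "(w, 1) \<in> ?R" "(1, w) \<in> ?R" if "w \<in> {2..n}" for w
    using that by (auto simp: graph_rel_def star_edge_def)
  then have "(u, 1) \<in> ?R\<^sup>*" "(1, v) \<in> ?R\<^sup>*"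
    using assms by (cases "u = 1"; cases "v = 1"; force)+
  then show ?thesis by (rule rtrancl_trans)
qed

lemma star_gball_centre:
  assumes "n \<ge> 1"
  shows "gball {1..n} (star_edge n) 1 0 = {1}"
  using assms by (intro gball_0 star_rtrancl) auto

lemma star_gball_leaf:
  assumes "i \<in> {2..n}"
  shows "gball {1..n} (star_edge n) i 1 = {i, 1}"
proof -
  have "gball {1..n} (star_edge n) i 1 = insert i {u \<in> {1..n}. star_edge n u i}"
    using assms by (intro gball_1 star_rtrancl) auto
  also have "{u \<in> {1..n}. star_edge n u i} = {1}"
    using assms by (auto simp: star_edge_def)
  finally show ?thesis .
qed

lemma star_maxop_norm_powr_ge:
  assumes "n \<ge> 1" "p > 0"
  shows "(1 + sqrt (real n)) / 2 \<le> maxop_norm {1..n} (star_edge n) p powr p"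
proof -
  define s where "s = sqrt (real n)"
  define x where "x = 1 + s"
  define c where "c = x powr (2 / p)"
  define f where "f = (\<lambda>v::nat. if v = 1 then c else 1)"
  let ?M = "maxop {1..n} (star_edge n) f"
  have s_pos: "s > 0" and n_eq: "real n = s\<^sup>2"
    using assms(1) by (simp_all add: s_def)
  have x_pos: "x > 0" and c_pos: "c > 0"
    using s_pos by (simp_all add: x_def c_def)
  have c_powr: "c powr p = x\<^sup>2"
    using assms(2) x_pos by (simp add: c_def powr_powr powr_realpow)
  have x_le: "x \<le> ((1 + c) / 2) powr p"
  proof -
    have "x = sqrt c powr p"
      using assms(2) x_pos by (simp add: c_def powr_half_sqrt[symmetric] powr_powr)
    also have "\<dots> \<le> ((1 + c) / 2) powr p"
      using arith_geo_mean_sqrt[of 1 c] c_pos assms(2) by (intro powr_mono2) auto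
    finally show ?thesis .
  qed
  have sum_split: "sum g {1..n} = g 1 + sum g {2..n}" for g :: "nat \<Rightarrow> real"
    using assms(1) by (simp add: sum.atLeast_Suc_atMost numeral_2_eq_2)
  have centre: "c \<le> ?M 1"
    using maxop_ge_gball_average[where V = "{1..n}" and r = 0 and E = "star_edge n" and v = 1 and f = f]
      star_gball_centre[OF assms(1)]
    by (simp add: f_def c_pos)
  have leaf: "(1 + c) / 2 \<le> ?M i" if "i \<in> {2..n}" for i
    using maxop_ge_gball_average[where V = "{1..n}" and r = 1 and E = "star_edge n" and v = i and f = f]
      star_gball_leaf[OF that] that
    by (simp add: f_def c_pos add.commute)
  have f_sum: "(\<Sum>v \<in> {1..n}. \<bar>f v\<bar> powr p) = x\<^sup>2 + (real n - 1)"
    unfolding sum_split using assms(1) c_pos by (simp add: f_def c_powr of_nat_diff)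
  have maxop_sum: "x\<^sup>2 + (real n - 1) * x \<le> (\<Sum>v \<in> {1..n}. \<bar>?M v\<bar> powr p)"
  proof -
    have "x\<^sup>2 \<le> \<bar>?M 1\<bar> powr p"
      unfolding c_powr[symmetric] using centre c_pos assms(2) by (intro powr_mono2) auto
    moreover have "(\<Sum>i \<in> {2..n}. x) \<le> (\<Sum>i \<in> {2..n}. \<bar>?M i\<bar> powr p)"
    proof (rule sum_mono)
      fix i assume "i \<in> {2..n}"
      have "((1 + c) / 2) powr p \<le> \<bar>?M i\<bar> powr p"
        using leaf[OF \<open>i \<in> {2..n}\<close>] c_pos assms(2) by (intro powr_mono2) auto
      then show "x \<le> \<bar>?M i\<bar> powr p"
        using x_le by linarith
    qed
    ultimately show ?thesis
      unfolding sum_split using assms(1) by (simp add: of_nat_diff)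
  qed
  have denom: "x\<^sup>2 + (real n - 1) = 2 * s * x" and numer: "x\<^sup>2 + (real n - 1) * x = s * x * x"
    unfolding n_eq x_def by (simp_all add: power2_eq_square algebra_simps)
  have "x / 2 = (x\<^sup>2 + (real n - 1) * x) / (x\<^sup>2 + (real n - 1))"
    unfolding denom numer using s_pos x_pos by simp
  also have "\<dots> \<le> (\<Sum>v \<in> {1..n}. \<bar>?M v\<bar> powr p) / (\<Sum>v \<in> {1..n}. \<bar>f v\<bar> powr p)"
    unfolding f_sum using maxop_sum s_pos x_pos by (intro divide_right_mono) (simp_all add: denom)
  also have "\<dots> \<le> maxop_norm {1..n} (star_edge n) p powr p"
    by (rule powr_sum_ratio_le_maxop_norm[where v = 1]) (use assms c_pos in \<open>auto simp: f_def\<close>)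
  finally show ?thesis
    by (simp add: x_def s_def)
qed

theorem lemma3p4:
  fixes n :: nat
  assumes "n \<ge> 3"
  shows "Liminf at_top (\<lambda>p::real. ereal ((maxop_norm {1..n} (star_edge n) p) powr p))
           \<ge> ereal ((1 + sqrt (real n)) / 2)"
proof (rule Liminf_bounded)
  show "\<forall>\<^sub>F p in at_top.
      ereal ((1 + sqrt (real n)) / 2) \<le> ereal (maxop_norm {1..n} (star_edge n) p powr p)"
    by (rule eventually_mono[OF eventually_gt_at_top[of 0]])
      (use star_maxop_norm_powr_ge[of n] assms in simp)
qed

end
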